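(* Let $\mathbf{Meas}$ be the category of measurable spaces and measurable maps, and $\mathcal{G}_{\le1}$ the subprobability Giry monad on it: $\mathcal{G}_{\le1}(X)$ is the set of subprobability measures $\phi\colon\Sigma_X\to[0,1]$ (countably additive, $\phi(\emptyset)=0$), with the least $\sigma$-algebra making all evaluations $\phi\mapsto\phi(M)$, $M\in\Sigma_X$, measurable. Let $\mathcal{K}\ell(\mathcal{G}_{\le1})$ be its Kleisli category: morphisms $X\to Y$ are measurable $f\colon X\to\mathcal{G}_{\le1}(Y)$, with composition $(g\odot f)(x)(N)=\int g(-)(N)\,\mathrm{d}f(x)$. Define $\square\colon\mathcal{K}\ell(\mathcal{G}_{\le1})\to\mathbf{PoSets}^{\mathrm{op}}$ by letting $\square(X)$ be the set of measurable functions $X\to[0,1]$ with the pointwise order, and for $f\colon X\to\mathcal{G}_{\le1}(Y)$ and measurable $q\colon Y\to[0,1]$, $\square(f)(q)(x)=\int q\,\mathrm{d}f(x)+(1-f(x)(Y))$. Then the forgetful functor $U\colon\int\square\to\mathcal{K}\ell(\mathcal{G}_{\le1})$ has a left adjoint $0$ with $0(X)=(X,\text{const }0)$ and a right adjoint $1$ with $1(X)=(X,\text{const }1)$; moreover there is a functor (comprehension) $\int\square\to\mathcal{K}\ell(\mathcal{G}_{\le1})$ with $(X,p)\mapsto\{x\in X\mid p(x)=1\}$ which is right adjoint to $1$, and a functor (quotient) with $(X,p)\mapsto X/p=\{x\in X\mid p(x)\neq1\}$ which is left adjoint to $0$, where these subsets carry the subspace $\sigma$-algebra.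
   Context: For a functor $F\colon\mathcal{B}\to\mathbf{PoSets}^{\mathrm{op}}$, $\int F$ is the category with objects $(X,P)$, $P\in F(X)$, and morphisms $f\colon(X,P)\to(Y,Q)$ the morphisms $f\colon X\to Y$ of $\mathcal{B}$ with $P\le F(f)(Q)$; the forgetful functor sends $(X,P)\mapsto X$, $f\mapsto f$; $0$ and $1$ act as identity on morphisms. *)

theory Defs
  imports "HOL-Probability.Probability"
begin

text \<open>Subprobability measures on Y: measures with the sigma-algebra of Y and total mass at most 1.
  (Unlike the library's subprob_space, the null measure on an empty space is allowed.)\<close>
definition subprobs :: "'b measure \<Rightarrow> 'b measure set" where
  "subprobs Y = {M. sets M = sets Y \<and> emeasure M (space M) \<le> 1}"

definition giry_le1 :: "'b measure \<Rightarrow> 'b measure measure" where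
  "giry_le1 Y = sigma (subprobs Y)
     {{M \<in> subprobs Y. measure M A \<in> B} | A B. A \<in> sets Y \<and> B \<in> sets (borel :: real measure)}"

definition kl_hom :: "'a measure \<Rightarrow> 'b measure \<Rightarrow> ('a \<Rightarrow> 'b measure) \<Rightarrow> bool" where
  "kl_hom X Y f \<longleftrightarrow> f \<in> X \<rightarrow>\<^sub>M giry_le1 Y"

definition kl_comp :: "'c measure \<Rightarrow> ('b \<Rightarrow> 'c measure) \<Rightarrow> ('a \<Rightarrow> 'b measure) \<Rightarrow> 'a \<Rightarrow> 'c measure" where
  "kl_comp Z g f = (\<lambda>x. measure_of (space Z) (sets Z) (\<lambda>N. \<integral>\<^sup>+ y. emeasure (g y) N \<partial>(f x)))"

definition kl_id :: "'a measure \<Rightarrow> 'a \<Rightarrow> 'a measure" where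
  "kl_id X = return X"

definition kl_eq :: "'a measure \<Rightarrow> ('a \<Rightarrow> 'b measure) \<Rightarrow> ('a \<Rightarrow> 'b measure) \<Rightarrow> bool" where
  "kl_eq X f g \<longleftrightarrow> (\<forall>x\<in>space X. f x = g x)"

definition pred_on :: "'a measure \<Rightarrow> ('a \<Rightarrow> real) \<Rightarrow> bool" where
  "pred_on X p \<longleftrightarrow> p \<in> borel_measurable X \<and> (\<forall>x\<in>space X. 0 \<le> p x \<and> p x \<le> 1)"

definition box :: "'b measure \<Rightarrow> ('a \<Rightarrow> 'b measure) \<Rightarrow> ('b \<Rightarrow> real) \<Rightarrow> 'a \<Rightarrow> real" where
  "box Y f q = (\<lambda>x. (\<integral> y. q y \<partial>(f x)) + (1 - measure (f x) (space Y)))"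

definition groth_hom :: "'a measure \<Rightarrow> ('a \<Rightarrow> real) \<Rightarrow> 'b measure \<Rightarrow> ('b \<Rightarrow> real)
    \<Rightarrow> ('a \<Rightarrow> 'b measure) \<Rightarrow> bool" where
  "groth_hom X p Y q f \<longleftrightarrow> kl_hom X Y f \<and> (\<forall>x\<in>space X. p x \<le> box Y f q x)"

definition cmpr :: "'a measure \<Rightarrow> ('a \<Rightarrow> real) \<Rightarrow> 'a measure" where
  "cmpr X p = restrict_space X {x \<in> space X. p x = 1}"

definition quot :: "'a measure \<Rightarrow> ('a \<Rightarrow> real) \<Rightarrow> 'a measure" where
  "quot X p = restrict_space X {x \<in> space X. p x \<noteq> 1}"

definition cmpr_counit :: "'a measure \<Rightarrow> ('a \<Rightarrow> real) \<Rightarrow> 'a \<Rightarrow> 'a measure" where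
  "cmpr_counit X p = (\<lambda>x. return X x)"

definition quot_unit :: "'a measure \<Rightarrow> ('a \<Rightarrow> real) \<Rightarrow> 'a \<Rightarrow> 'a measure" where
  "quot_unit X p = (\<lambda>x. scale_measure (ennreal (1 - p x)) (return (quot X p) x))"

end

theory Submission
  imports Defs
begin

text \<open>Every Kleisli map is a morphism out of \<open>(X, 0)\<close> and into \<open>(Y, 1)\<close>, because
  \<open>\<box>(f)(q) \<ge> 0\<close> and \<open>\<box>(f)(1) = 1\<close>; hence \<open>0 \<turnstile> U \<turnstile> 1\<close> with identity units.
  A morphism \<open>g : (Y, 1) \<rightarrow> (X, p)\<close> satisfies \<open>\<integral> p dg(y) \<ge> g(y)(X)\<close>, so \<open>g(y)\<close> is
  concentrated on \<open>{p = 1}\<close> and factors uniquely through the comprehension by restriction.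
  A morphism \<open>f : (X, p) \<rightarrow> (Y, 0)\<close> satisfies \<open>f(x)(Y) \<le> 1 - p(x)\<close>, so \<open>f(x) = 0\<close> where
  \<open>p = 1\<close>, and elsewhere \<open>f = (1 - p) \<cdot> (f / (1 - p))\<close>: it factors uniquely through the unit
  \<open>x \<mapsto> (1 - p(x)) \<cdot> \<delta>\<^sub>x\<close> of the quotient \<open>X/p\<close>.\<close>

section \<open>Kleisli maps into subprobability measures\<close>

lemma space_giry_le1 [simp]: "space (giry_le1 Y) = subprobs Y"
  unfolding giry_le1_def by (rule space_measure_of) auto

lemma sets_subprobs: "M \<in> subprobs Y \<Longrightarrow> sets M = sets Y"
  by (simp add: subprobs_def)

lemma space_subprobs: "M \<in> subprobs Y \<Longrightarrow> space M = space Y"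
  using sets_eq_imp_space_eq sets_subprobs by blast

lemma finite_measure_subprobs: "M \<in> subprobs Y \<Longrightarrow> finite_measure M"
  by (rule finite_measureI) (auto simp: subprobs_def top_unique)

lemma measure_space_subprobs_le_1:
  assumes "M \<in> subprobs Y"
  shows "measure M (space Y) \<le> 1"
proof -
  interpret finite_measure M using finite_measure_subprobs[OF assms] .
  have "emeasure M (space M) \<le> 1" using assms by (simp add: subprobs_def)
  then show ?thesis by (simp add: emeasure_eq_measure space_subprobs[OF assms])
qed

lemma subprobs_eq_null_measure:
  assumes M: "M \<in> subprobs Y" and "measure M (space Y) = 0"
  shows "M = null_measure Y"
proof (rule measure_eqI)
  interpret finite_measure M using finite_measure_subprobs[OF M] .
  fix A assume "A \<in> sets M"
  then have "measure M A = 0"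
    using assms bounded_measure[of A] measure_nonneg[of M A] by (simp add: space_subprobs[OF M])
  then show "emeasure M A = emeasure (null_measure Y) A" by (simp add: emeasure_eq_measure)
qed (simp add: sets_subprobs[OF M])

lemma kl_hom_subprobs: "kl_hom X Y f \<Longrightarrow> x \<in> space X \<Longrightarrow> f x \<in> subprobs Y"
  unfolding kl_hom_def by (metis measurable_space space_giry_le1)

lemma measurable_measure_giry_le1:
  assumes "A \<in> sets Y"
  shows "(\<lambda>M. measure M A) \<in> borel_measurable (giry_le1 Y)"
proof (rule measurableI)
  fix B :: "real set" assume "B \<in> sets borel"
  then have "{M \<in> subprobs Y. measure M A \<in> B} \<in> sets (giry_le1 Y)"
    unfolding giry_le1_def using assms by (subst sets_measure_of) (auto intro: sigma_sets.Basic)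
  moreover have "(\<lambda>M. measure M A) -` B \<inter> space (giry_le1 Y) = {M \<in> subprobs Y. measure M A \<in> B}"
    by auto
  ultimately show "(\<lambda>M. measure M A) -` B \<inter> space (giry_le1 Y) \<in> sets (giry_le1 Y)" by simp
qed simp

lemma borel_measurable_kl_hom_measure:
  "kl_hom X Y f \<Longrightarrow> A \<in> sets Y \<Longrightarrow> (\<lambda>x. measure (f x) A) \<in> borel_measurable X"
  unfolding kl_hom_def using measurable_comp[OF _ measurable_measure_giry_le1] by (simp add: o_def)

lemma borel_measurable_kl_hom_emeasure:
  assumes "kl_hom X Y f" "A \<in> sets Y"
  shows "(\<lambda>x. emeasure (f x) A) \<in> borel_measurable X"
proof (rule measurable_cong[THEN iffD2])
  show "(\<lambda>x. ennreal (measure (f x) A)) \<in> borel_measurable X"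
    using borel_measurable_kl_hom_measure[OF assms] by measurable
  show "emeasure (f x) A = ennreal (measure (f x) A)" if "x \<in> space X" for x
    using finite_measure_subprobs[OF kl_hom_subprobs[OF assms(1) that]]
    by (rule finite_measure.emeasure_eq_measure)
qed

lemma kl_homI:
  assumes "\<And>x. x \<in> space X \<Longrightarrow> f x \<in> subprobs Y"
    and "\<And>A. A \<in> sets Y \<Longrightarrow> (\<lambda>x. measure (f x) A) \<in> borel_measurable X"
  shows "kl_hom X Y f"
  unfolding kl_hom_def giry_le1_def
proof (rule measurable_measure_of)
  fix S assume "S \<in> {{M \<in> subprobs Y. measure M A \<in> B} | A B. A \<in> sets Y \<and> B \<in> sets (borel :: real measure)}"
  then obtain A B where "S = {M \<in> subprobs Y. measure M A \<in> B}" "A \<in> sets Y" "B \<in> sets (borel :: real measure)"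
    by blast
  moreover have "f -` S \<inter> space X = (\<lambda>x. measure (f x) A) -` B \<inter> space X"
    using assms(1) calculation(1) by auto
  ultimately show "f -` S \<inter> space X \<in> sets X" using measurable_sets[OF assms(2)] by simp
qed (use assms(1) in auto)

lemma kl_hom_return:
  assumes "sets R \<subseteq> sets X"
  shows "kl_hom X R (return R)"
proof (rule kl_homI)
  show "return R x \<in> subprobs R" for x
    by (simp add: subprobs_def indicator_def)
  show "(\<lambda>x. measure (return R x) A) \<in> borel_measurable X" if "A \<in> sets R" for A
  proof -
    have "A \<in> sets X" using that assms by blast
    then show ?thesis using that by (simp add: measure_return cong: measurable_cong)
  qed
qed

lemma kl_hom_kl_id: "kl_hom X X (kl_id X)"
  unfolding kl_id_def by (simp add: kl_hom_return)

text \<open>\<^const>\<open>kl_comp\<close> is introduced by \<^const>\<open>measure_of\<close>, so it is computed by exhibiting a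
  measure with the prescribed values; this avoids proving countable additivity of the integral.\<close>

lemma kl_comp_eqI:
  assumes "sets M = sets Z"
    and "\<And>N. N \<in> sets Z \<Longrightarrow> (\<integral>\<^sup>+ y. emeasure (g y) N \<partial>f x) = emeasure M N"
  shows "kl_comp Z g f x = M"
proof -
  have "kl_comp Z g f x = measure_of (space M) (sets M) (emeasure M)"
    unfolding kl_comp_def sets_eq_imp_space_eq[OF assms(1)] assms(1)
    by (rule measure_of_eq[OF sets.space_closed]) (simp add: sets.sigma_sets_eq assms(2))
  then show ?thesis by (simp add: measure_of_of_measure)
qed

lemma kl_comp_kl_id_right:
  assumes "kl_hom X Y g" "x \<in> space X"
  shows "kl_comp Y g (kl_id X) x = g x"
  unfolding kl_id_def
proof (rule kl_comp_eqI)
  show "sets (g x) = sets Y" using sets_subprobs[OF kl_hom_subprobs[OF assms]] .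
  show "(\<integral>\<^sup>+ y. emeasure (g y) N \<partial>return X x) = emeasure (g x) N" if "N \<in> sets Y" for N
    using nn_integral_return[OF assms(2) borel_measurable_kl_hom_emeasure[OF assms(1) that]] .
qed

lemma kl_comp_kl_id_left_distr:
  assumes "(\<lambda>z. z) \<in> measurable (h x) Z"
  shows "kl_comp Z (kl_id Z) h x = distr (h x) Z (\<lambda>z. z)"
proof (rule kl_comp_eqI)
  fix N assume N: "N \<in> sets Z"
  have "(\<integral>\<^sup>+ z. emeasure (return Z z) N \<partial>h x) = (\<integral>\<^sup>+ z. indicator (N \<inter> space (h x)) z \<partial>h x)"
    using N by (intro nn_integral_cong) (simp split: split_indicator)
  also have "\<dots> = emeasure (distr (h x) Z (\<lambda>z. z)) N"
    using N measurable_sets[OF assms N] by (simp add: emeasure_distr[OF assms N] Int_commute)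
  finally show "(\<integral>\<^sup>+ z. emeasure (kl_id Z z) N \<partial>h x) = emeasure (distr (h x) Z (\<lambda>z. z)) N"
    by (simp add: kl_id_def)
qed simp

lemma kl_comp_kl_id_left:
  assumes "kl_hom X Y g" "x \<in> space X"
  shows "kl_comp Y (kl_id Y) g x = g x"
proof -
  have "sets (g x) = sets Y" using sets_subprobs[OF kl_hom_subprobs[OF assms]] .
  then show ?thesis
    by (simp add: kl_comp_kl_id_left_distr measurable_ident_sets distr_id2)
qed

lemma pred_on_const: "0 \<le> c \<Longrightarrow> c \<le> 1 \<Longrightarrow> pred_on X (\<lambda>_. c)"
  by (simp add: pred_on_def)

lemma sets_pred_eq_1:
  assumes "pred_on X p"
  shows "{x \<in> space X. p x = 1} \<in> sets X" and "{x \<in> space X. p x \<noteq> 1} \<in> sets X"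
proof -
  have [measurable]: "p \<in> borel_measurable X" using assms by (simp add: pred_on_def)
  show "{x \<in> space X. p x = 1} \<in> sets X" "{x \<in> space X. p x \<noteq> 1} \<in> sets X"
    by measurable
qed

lemma box_nonneg:
  assumes "pred_on Y q" "kl_hom X Y f" "x \<in> space X"
  shows "0 \<le> box Y f q x"
proof -
  have fx: "f x \<in> subprobs Y" using kl_hom_subprobs[OF assms(2,3)] .
  have "0 \<le> (\<integral>y. q y \<partial>f x)"
    using assms(1) by (intro integral_nonneg_AE AE_I2) (simp add: pred_on_def space_subprobs[OF fx])
  then show ?thesis using measure_space_subprobs_le_1[OF fx] by (simp add: box_def)
qed

lemma box_const_1:
  assumes "kl_hom X Y f" "x \<in> space X"
  shows "box Y f (\<lambda>_. 1) x = 1"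
  using space_subprobs[OF kl_hom_subprobs[OF assms]] by (simp add: box_def)

lemma groth_hom_from_0_iff: "pred_on Y q \<Longrightarrow> groth_hom X (\<lambda>_. 0) Y q f \<longleftrightarrow> kl_hom X Y f"
  using box_nonneg by (auto simp: groth_hom_def)

lemma groth_hom_to_1_iff: "pred_on X p \<Longrightarrow> groth_hom X p Y (\<lambda>_. 1) f \<longleftrightarrow> kl_hom X Y f"
  by (auto simp: groth_hom_def pred_on_def box_const_1)

lemma zero_left_adjoint_forget:
  "pred_on X (\<lambda>_. 0) \<and> kl_hom X X (kl_id X) \<and>
     (\<forall>q f. pred_on Y q \<longrightarrow> kl_hom X Y f \<longrightarrow>
        (\<exists>g. groth_hom X (\<lambda>_. 0) Y q g \<and> kl_eq X (kl_comp Y g (kl_id X)) f \<and>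
           (\<forall>g'. groth_hom X (\<lambda>_. 0) Y q g' \<and> kl_eq X (kl_comp Y g' (kl_id X)) f
                  \<longrightarrow> kl_eq X g' g)))"
  by (auto simp: pred_on_const kl_hom_kl_id groth_hom_from_0_iff kl_eq_def kl_comp_kl_id_right)

lemma one_right_adjoint_forget:
  "pred_on Y (\<lambda>_. 1) \<and> kl_hom Y Y (kl_id Y) \<and>
     (\<forall>p f. pred_on X p \<longrightarrow> kl_hom X Y f \<longrightarrow>
        (\<exists>g. groth_hom X p Y (\<lambda>_. 1) g \<and> kl_eq X (kl_comp Y (kl_id Y) g) f \<and>
           (\<forall>g'. groth_hom X p Y (\<lambda>_. 1) g' \<and> kl_eq X (kl_comp Y (kl_id Y) g') f
                  \<longrightarrow> kl_eq X g' g)))"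
  by (auto simp: pred_on_const kl_hom_kl_id groth_hom_to_1_iff kl_eq_def kl_comp_kl_id_left)

section \<open>Comprehension\<close>

lemma sets_kl_comp [simp]: "sets (kl_comp Z g f x) = sets Z"
  by (simp add: kl_comp_def sets.sigma_sets_eq)

lemma kl_hom_restrict_space_domain: "kl_hom X Y f \<Longrightarrow> kl_hom (restrict_space X S) Y f"
  unfolding kl_hom_def by (rule measurable_restrict_space1)

lemma kl_hom_restrict_space:
  assumes g: "kl_hom Y X g" and S: "S \<in> sets X"
  shows "kl_hom Y (restrict_space X S) (\<lambda>y. restrict_space (g y) S)"
proof (rule kl_homI)
  fix y assume y: "y \<in> space Y"
  have gy: "g y \<in> subprobs X" using kl_hom_subprobs[OF g y] .
  have S': "S \<inter> space (g y) \<in> sets (g y)"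
    using S by (simp add: space_subprobs[OF gy] sets_subprobs[OF gy] sets.Int_space_eq2)
  have "emeasure (restrict_space (g y) S) (space (restrict_space (g y) S)) \<le> emeasure (g y) (space (g y))"
    using S' by (simp add: space_restrict_space emeasure_restrict_space emeasure_space)
  also have "\<dots> \<le> 1" using gy by (simp add: subprobs_def)
  finally show "restrict_space (g y) S \<in> subprobs (restrict_space X S)"
    by (simp add: subprobs_def sets_restrict_space_cong[OF sets_subprobs[OF gy]])
next
  fix A assume "A \<in> sets (restrict_space X S)"
  then have A: "A \<subseteq> S" "A \<in> sets X" using S by (simp_all add: sets_restrict_space_iff)
  have "measure (restrict_space (g y) S) A = measure (g y) A" if "y \<in> space Y" for y
    using kl_hom_subprobs[OF g that] S A(1)
    by (intro measure_restrict_space) (simp add: space_subprobs sets_subprobs sets.Int_space_eq2)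
  then show "(\<lambda>y. measure (restrict_space (g y) S) A) \<in> borel_measurable Y"
    using borel_measurable_kl_hom_measure[OF g A(2)] by (simp cong: measurable_cong)
qed

lemma emeasure_kl_comp_kl_id_restrict_space:
  assumes h: "kl_hom Y (restrict_space X S) h" and S: "S \<in> sets X"
    and y: "y \<in> space Y" and A: "A \<in> sets X"
  shows "emeasure (kl_comp X (kl_id X) h y) A = emeasure (h y) (A \<inter> S)"
proof -
  have hy: "h y \<in> subprobs (restrict_space X S)" using kl_hom_subprobs[OF h y] .
  have id: "(\<lambda>z. z) \<in> measurable (h y) X"
    unfolding measurable_cong_sets[OF sets_subprobs[OF hy] refl]
    by (rule measurable_restrict_space1[OF measurable_ident_sets[OF refl]])
  show ?thesis
    using S by (simp add: kl_comp_kl_id_left_distr[of h y, OF id] emeasure_distr[OF id A]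
        space_subprobs[OF hy] Int_commute)
qed

lemma kl_comp_kl_id_restrict_space:
  assumes g: "kl_hom Y X g" and S: "S \<in> sets X" and y: "y \<in> space Y"
    and AE_S: "AE x in g y. x \<in> S"
  shows "kl_comp X (kl_id X) (\<lambda>y. restrict_space (g y) S) y = g y"
proof (rule measure_eqI)
  have gy: "g y \<in> subprobs X" using kl_hom_subprobs[OF g y] .
  show "sets (kl_comp X (kl_id X) (\<lambda>y. restrict_space (g y) S) y) = sets (g y)"
    by (simp add: sets_subprobs[OF gy])
  fix A assume "A \<in> sets (kl_comp X (kl_id X) (\<lambda>y. restrict_space (g y) S) y)"
  then have A: "A \<in> sets X" by simp
  have "emeasure (kl_comp X (kl_id X) (\<lambda>y. restrict_space (g y) S) y) A
      = emeasure (restrict_space (g y) S) (A \<inter> S)"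
    by (rule emeasure_kl_comp_kl_id_restrict_space[OF kl_hom_restrict_space[OF g S] S y A])
  also have "\<dots> = emeasure (g y) (A \<inter> S)"
    using S by (intro emeasure_restrict_space) (simp_all add: space_subprobs[OF gy] sets_subprobs[OF gy] sets.Int_space_eq2)
  also have "\<dots> = emeasure (g y) A"
    using AE_S A S by (intro emeasure_eq_AE) (auto simp: sets_subprobs[OF gy])
  finally show "emeasure (kl_comp X (kl_id X) (\<lambda>y. restrict_space (g y) S) y) A = emeasure (g y) A" .
qed

lemma kl_comp_kl_id_restrict_space_inject:
  assumes h: "kl_hom Y (restrict_space X S) h" and h': "kl_hom Y (restrict_space X S) h'"
    and S: "S \<in> sets X" and y: "y \<in> space Y"
    and eq: "kl_comp X (kl_id X) h y = kl_comp X (kl_id X) h' y"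
  shows "h y = h' y"
proof (rule measure_eqI)
  show sets_eq: "sets (h y) = sets (h' y)"
    using sets_subprobs[OF kl_hom_subprobs[OF h y]] sets_subprobs[OF kl_hom_subprobs[OF h' y]] by simp
  fix A assume "A \<in> sets (h y)"
  then have A: "A \<subseteq> S" "A \<in> sets X"
    using S sets_subprobs[OF kl_hom_subprobs[OF h y]] by (simp_all add: sets_restrict_space_iff)
  then show "emeasure (h y) A = emeasure (h' y) A"
    using emeasure_kl_comp_kl_id_restrict_space[OF h S y A(2)]
      emeasure_kl_comp_kl_id_restrict_space[OF h' S y A(2)] eq by (simp add: Int_absorb2)
qed

lemma AE_eq_1_if_measure_le_integral:
  fixes p :: "'a \<Rightarrow> real"
  assumes "finite_measure M" and p: "p \<in> borel_measurable M"
    and p01: "\<And>x. x \<in> space M \<Longrightarrow> 0 \<le> p x \<and> p x \<le> 1"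
    and le: "measure M (space M) \<le> (\<integral>x. p x \<partial>M)"
  shows "AE x in M. p x = 1"
proof -
  interpret finite_measure M by fact
  have int_p: "integrable M p"
    using p p01 by (intro integrable_const_bound[where B=1]) auto
  have int_1p: "integrable M (\<lambda>x. 1 - p x)" using int_p by simp
  have nonneg: "AE x in M. 0 \<le> 1 - p x" using p01 by (intro AE_I2) simp
  have "(\<integral>x. 1 - p x \<partial>M) = measure M (space M) - (\<integral>x. p x \<partial>M)"
    using int_p by simp
  then have "(\<integral>x. 1 - p x \<partial>M) = 0"
    using le integral_nonneg_AE[OF nonneg] by linarith
  then have "AE x in M. 1 - p x = 0"
    using integral_nonneg_eq_0_iff_AE[OF int_1p nonneg] by simp
  then show ?thesis by simp
qed

lemma groth_hom_from_1_AE: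
  assumes p: "pred_on X p" and g: "groth_hom Y (\<lambda>_. 1) X p g" and y: "y \<in> space Y"
  shows "AE x in g y. p x = 1"
proof -
  have gy: "g y \<in> subprobs X" using g y by (auto simp: groth_hom_def intro: kl_hom_subprobs)
  show ?thesis
  proof (rule AE_eq_1_if_measure_le_integral)
    show "finite_measure (g y)" using finite_measure_subprobs[OF gy] .
    show "p \<in> borel_measurable (g y)"
      using p by (simp add: pred_on_def measurable_cong_sets[OF sets_subprobs[OF gy] refl])
    show "0 \<le> p x \<and> p x \<le> 1" if "x \<in> space (g y)" for x
      using p that by (simp add: pred_on_def space_subprobs[OF gy])
    show "measure (g y) (space (g y)) \<le> (\<integral>x. p x \<partial>g y)"
      using g y by (simp add: groth_hom_def box_def space_subprobs[OF gy])
  qed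
qed

lemma box_kl_id:
  assumes "pred_on X p" "x \<in> space X"
  shows "box X (kl_id X) p x = p x"
  using assms by (simp add: box_def kl_id_def pred_on_def integral_return measure_return)

lemma groth_hom_cmpr_counit:
  assumes p: "pred_on X p"
  shows "groth_hom (cmpr X p) (\<lambda>_. 1) X p (cmpr_counit X p)"
proof -
  have "cmpr_counit X p = kl_id X" by (simp add: cmpr_counit_def kl_id_def fun_eq_iff)
  then show ?thesis
    using sets_pred_eq_1(1)[OF p]
    by (auto simp: groth_hom_def cmpr_def kl_hom_restrict_space_domain kl_hom_kl_id box_kl_id[OF p])
qed

lemma one_left_adjoint_cmpr:
  fixes Y :: "'b measure"
  assumes p: "pred_on X p"
  shows "groth_hom (cmpr X p) (\<lambda>_. 1) X p (cmpr_counit X p) \<and>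
      (\<forall>(g :: 'b \<Rightarrow> 'a measure). groth_hom Y (\<lambda>_. 1) X p g \<longrightarrow>
        (\<exists>h. kl_hom Y (cmpr X p) h \<and> kl_eq Y (kl_comp X (cmpr_counit X p) h) g \<and>
           (\<forall>h'. kl_hom Y (cmpr X p) h' \<and> kl_eq Y (kl_comp X (cmpr_counit X p) h') g
                  \<longrightarrow> kl_eq Y h' h)))"
proof (intro conjI allI impI groth_hom_cmpr_counit[OF p])
  define S where "S = {x \<in> space X. p x = 1}"
  have S: "S \<in> sets X" unfolding S_def by (rule sets_pred_eq_1(1)[OF p])
  have cmpr: "cmpr X p = restrict_space X S" by (simp add: cmpr_def S_def)
  have counit: "cmpr_counit X p = kl_id X" by (simp add: cmpr_counit_def kl_id_def fun_eq_iff)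
  fix g :: "'b \<Rightarrow> 'a measure"
  assume g1: "groth_hom Y (\<lambda>_. 1) X p g"
  then have g: "kl_hom Y X g" by (simp add: groth_hom_def)
  have AE_S: "AE x in g y. x \<in> S" if "y \<in> space Y" for y
    using groth_hom_from_1_AE[OF p g1 that]
  proof (rule AE_mp)
    show "AE x in g y. p x = 1 \<longrightarrow> x \<in> S"
      using space_subprobs[OF kl_hom_subprobs[OF g that]] by (intro AE_I2) (simp add: S_def)
  qed
  let ?h = "\<lambda>y. restrict_space (g y) S"
  have h: "kl_hom Y (restrict_space X S) ?h" using kl_hom_restrict_space[OF g S] .
  have h_comp: "kl_eq Y (kl_comp X (kl_id X) ?h) g"
    using kl_comp_kl_id_restrict_space[OF g S _ AE_S] by (simp add: kl_eq_def)
  show "\<exists>h. kl_hom Y (cmpr X p) h \<and> kl_eq Y (kl_comp X (cmpr_counit X p) h) g \<and>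
         (\<forall>h'. kl_hom Y (cmpr X p) h' \<and> kl_eq Y (kl_comp X (cmpr_counit X p) h') g
                \<longrightarrow> kl_eq Y h' h)"
    unfolding cmpr counit
  proof (intro exI[of _ ?h] conjI allI impI h h_comp)
    fix h' assume "kl_hom Y (restrict_space X S) h' \<and> kl_eq Y (kl_comp X (kl_id X) h') g"
    then show "kl_eq Y h' ?h"
      using h_comp kl_comp_kl_id_restrict_space_inject[OF _ h S] by (simp add: kl_eq_def)
  qed
qed

section \<open>Quotient\<close>

lemma scale_measure_inverse:
  assumes "(r::real) > 0"
  shows "scale_measure (ennreal (1 / r)) (scale_measure (ennreal r) M) = M"
    and "scale_measure (ennreal r) (scale_measure (ennreal (1 / r)) M) = M"
  using assms by (simp_all flip: ennreal_mult)

lemma kl_hom_scale_measure: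
  assumes f: "kl_hom X Y f" and c: "c \<in> borel_measurable X"
    and c_bound: "\<And>x. x \<in> space X \<Longrightarrow> 0 \<le> c x \<and> c x * measure (f x) (space Y) \<le> 1"
  shows "kl_hom X Y (\<lambda>x. scale_measure (ennreal (c x)) (f x))"
proof (rule kl_homI)
  fix x assume x: "x \<in> space X"
  have fx: "f x \<in> subprobs Y" using kl_hom_subprobs[OF f x] .
  interpret finite_measure "f x" using finite_measure_subprobs[OF fx] .
  have "emeasure (scale_measure (ennreal (c x)) (f x)) (space Y) = ennreal (c x * measure (f x) (space Y))"
    using c_bound[OF x] by (simp add: emeasure_eq_measure ennreal_mult)
  then show "scale_measure (ennreal (c x)) (f x) \<in> subprobs Y"
    using c_bound[OF x] fx by (simp add: subprobs_def space_scale_measure space_subprobs[OF fx])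
next
  fix A assume "A \<in> sets Y"
  then have "(\<lambda>x. c x * measure (f x) A) \<in> borel_measurable X"
    using c borel_measurable_kl_hom_measure[OF f] by measurable
  then show "(\<lambda>x. measure (scale_measure (ennreal (c x)) (f x)) A) \<in> borel_measurable X"
    using c_bound by (simp cong: measurable_cong)
qed

lemma kl_comp_scale_return:
  assumes g: "kl_hom X Y g" and x: "x \<in> space X"
  shows "kl_comp Y g (\<lambda>x. scale_measure (c x) (return X x)) x = scale_measure (c x) (g x)"
proof (rule kl_comp_eqI)
  show "sets (scale_measure (c x) (g x)) = sets Y"
    using sets_subprobs[OF kl_hom_subprobs[OF g x]] by simp
  fix N assume N: "N \<in> sets Y"
  have "(\<lambda>y. emeasure (g y) N) \<in> borel_measurable (return X x)"
    using borel_measurable_kl_hom_emeasure[OF g N] by simp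
  then show "(\<integral>\<^sup>+ y. emeasure (g y) N \<partial>scale_measure (c x) (return X x)) = emeasure (scale_measure (c x) (g x)) N"
    by (simp add: nn_integral_scale_measure nn_integral_return[OF x borel_measurable_kl_hom_emeasure[OF g N]])
qed

lemma kl_comp_null_measure: "f x = null_measure M \<Longrightarrow> kl_comp Z g f x = null_measure Z"
  by (intro kl_comp_eqI) simp_all

lemma space_quot: "pred_on X p \<Longrightarrow> space (quot X p) = {x \<in> space X. p x \<noteq> 1}"
  by (simp add: quot_def sets_pred_eq_1(2))

lemma groth_hom_quot_unit:
  assumes p: "pred_on X p"
  shows "groth_hom X p (quot X p) (\<lambda>_. 0) (quot_unit X p)"
proof -
  define Q where "Q = {x \<in> space X. p x \<noteq> 1}"
  have Q: "Q \<in> sets X" unfolding Q_def by (rule sets_pred_eq_1(2)[OF p])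
  have quot: "quot X p = restrict_space X Q" by (simp add: quot_def Q_def)
  have p01: "0 \<le> p x \<and> p x \<le> 1" if "x \<in> space X" for x using p that by (simp add: pred_on_def)
  have measure_unit: "measure (quot_unit X p x) (space (quot X p)) = (1 - p x) * indicator Q x"
    if "x \<in> space X" for x
  proof -
    have "Q \<in> sets (quot X p)" using Q by (simp add: quot sets_restrict_space_iff)
    then show ?thesis using p01[OF that] Q by (simp add: quot_unit_def measure_return quot)
  qed
  have "kl_hom X (quot X p) (\<lambda>x. scale_measure (ennreal (1 - p x)) (return (quot X p) x))"
  proof (rule kl_hom_scale_measure)
    show "kl_hom X (quot X p) (return (quot X p))"
      using Q by (intro kl_hom_return) (auto simp: quot sets_restrict_space_iff)
    show "(\<lambda>x. 1 - p x) \<in> borel_measurable X"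
      using p unfolding pred_on_def by (intro borel_measurable_diff) auto
    show "0 \<le> 1 - p x \<and> (1 - p x) * measure (return (quot X p) x) (space (quot X p)) \<le> 1"
      if "x \<in> space X" for x
      using p01[OF that] by (auto simp: measure_return indicator_def)
  qed
  moreover have "p x \<le> box (quot X p) (quot_unit X p) (\<lambda>_. 0) x" if "x \<in> space X" for x
    using p01[OF that] that by (simp add: box_def measure_unit Q_def indicator_def)
  ultimately show ?thesis by (simp add: groth_hom_def quot_unit_def)
qed

lemma kl_comp_quot_unit:
  assumes "kl_hom (quot X p) Y g" "x \<in> space (quot X p)"
  shows "kl_comp Y g (quot_unit X p) x = scale_measure (ennreal (1 - p x)) (g x)"
  unfolding quot_unit_def by (rule kl_comp_scale_return[OF assms])

lemma kl_comp_quot_unit_inject: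
  assumes p: "pred_on X p" and g: "kl_hom (quot X p) Y g" and g': "kl_hom (quot X p) Y g'"
    and y: "y \<in> space (quot X p)"
    and eq: "kl_comp Y g (quot_unit X p) y = kl_comp Y g' (quot_unit X p) y"
  shows "g y = g' y"
proof -
  have pos: "0 < 1 - p y" using p y by (auto simp: space_quot pred_on_def)
  have "scale_measure (ennreal (1 - p y)) (g y) = scale_measure (ennreal (1 - p y)) (g' y)"
    using eq by (simp only: kl_comp_quot_unit[OF g y] kl_comp_quot_unit[OF g' y])
  then show ?thesis by (metis scale_measure_inverse(1)[OF pos])
qed

definition quot_factor :: "('a \<Rightarrow> real) \<Rightarrow> ('a \<Rightarrow> 'b measure) \<Rightarrow> 'a \<Rightarrow> 'b measure" where
  "quot_factor p f y = scale_measure (ennreal (1 / (1 - p y))) (f y)"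

lemma groth_hom_to_0_mass:
  "groth_hom X p Y (\<lambda>_. 0) f \<Longrightarrow> x \<in> space X \<Longrightarrow> measure (f x) (space Y) \<le> 1 - p x"
  by (auto simp: groth_hom_def box_def)

lemma kl_hom_quot_factor:
  assumes p: "pred_on X p" and f: "groth_hom X p Y (\<lambda>_. 0) f"
  shows "kl_hom (quot X p) Y (quot_factor p f)"
  unfolding quot_factor_def
proof (rule kl_hom_scale_measure)
  show "kl_hom (quot X p) Y f"
    using f unfolding quot_def groth_hom_def by (intro kl_hom_restrict_space_domain) simp
  have [measurable]: "p \<in> borel_measurable X" using p by (simp add: pred_on_def)
  show "(\<lambda>y. 1 / (1 - p y)) \<in> borel_measurable (quot X p)"
    unfolding quot_def by (intro measurable_restrict_space1) measurable
  show "0 \<le> 1 / (1 - p y) \<and> 1 / (1 - p y) * measure (f y) (space Y) \<le> 1"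
    if "y \<in> space (quot X p)" for y
    using that p groth_hom_to_0_mass[OF f, of y] by (auto simp: space_quot pred_on_def field_simps)
qed

lemma kl_comp_quot_factor:
  assumes p: "pred_on X p" and f: "groth_hom X p Y (\<lambda>_. 0) f" and x: "x \<in> space X"
  shows "kl_comp Y (quot_factor p f) (quot_unit X p) x = f x"
proof (cases "p x = 1")
  case True
  then have "kl_comp Y (quot_factor p f) (quot_unit X p) x = null_measure Y"
    by (intro kl_comp_null_measure) (simp add: quot_unit_def)
  also have "\<dots> = f x"
    using groth_hom_to_0_mass[OF f x] True measure_nonneg[of "f x" "space Y"] f x
    by (intro subprobs_eq_null_measure[symmetric]) (auto simp: groth_hom_def intro: kl_hom_subprobs)
  finally show ?thesis .
next
  case False
  then have x_quot: "x \<in> space (quot X p)" and pos: "0 < 1 - p x"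
    using p x by (auto simp: space_quot pred_on_def)
  show ?thesis
    using kl_comp_quot_unit[OF kl_hom_quot_factor[OF p f] x_quot]
    by (simp add: quot_factor_def scale_measure_inverse(2)[OF pos] del: scale_scale_measure)
qed

lemma quot_left_adjoint_zero:
  fixes Y :: "'b measure"
  assumes p: "pred_on X p"
  shows "groth_hom X p (quot X p) (\<lambda>_. 0) (quot_unit X p) \<and>
      (\<forall>f. groth_hom X p Y (\<lambda>_. 0) f \<longrightarrow>
        (\<exists>g. kl_hom (quot X p) Y g \<and> kl_eq X (kl_comp Y g (quot_unit X p)) f \<and>
           (\<forall>g'. kl_hom (quot X p) Y g' \<and> kl_eq X (kl_comp Y g' (quot_unit X p)) f
                  \<longrightarrow> kl_eq (quot X p) g' g)))"
proof (intro conjI allI impI groth_hom_quot_unit[OF p])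
  fix f assume f: "groth_hom X p Y (\<lambda>_. 0) f"
  have factor_comp: "kl_eq X (kl_comp Y (quot_factor p f) (quot_unit X p)) f"
    using kl_comp_quot_factor[OF p f] by (simp add: kl_eq_def)
  show "\<exists>g. kl_hom (quot X p) Y g \<and> kl_eq X (kl_comp Y g (quot_unit X p)) f \<and>
           (\<forall>g'. kl_hom (quot X p) Y g' \<and> kl_eq X (kl_comp Y g' (quot_unit X p)) f
                  \<longrightarrow> kl_eq (quot X p) g' g)"
  proof (intro exI[of _ "quot_factor p f"] conjI allI impI kl_hom_quot_factor[OF p f] factor_comp)
    fix g' assume g': "kl_hom (quot X p) Y g' \<and> kl_eq X (kl_comp Y g' (quot_unit X p)) f"
    show "kl_eq (quot X p) g' (quot_factor p f)"
      unfolding kl_eq_def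
    proof
      fix y assume y: "y \<in> space (quot X p)"
      then have "y \<in> space X" using p by (simp add: space_quot)
      then have "kl_comp Y g' (quot_unit X p) y = kl_comp Y (quot_factor p f) (quot_unit X p) y"
        using g' factor_comp by (simp add: kl_eq_def)
      then show "g' y = quot_factor p f y"
        using kl_comp_quot_unit_inject[OF p _ kl_hom_quot_factor[OF p f] y] g' by blast
    qed
  qed
qed

theorem proposition4p2:
  fixes X :: "'a measure" and Y :: "'b measure"
  shows
  \<comment> \<open>0 \<turnstile> U: universal arrow id_X : X \<rightarrow> U(X,0)\<close>
  "(pred_on X (\<lambda>_. 0) \<and> kl_hom X X (kl_id X) \<and>
     (\<forall>q f. pred_on Y q \<longrightarrow> kl_hom X Y f \<longrightarrow>
        (\<exists>g. groth_hom X (\<lambda>_. 0) Y q g \<and> kl_eq X (kl_comp Y g (kl_id X)) f \<and>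
           (\<forall>g'. groth_hom X (\<lambda>_. 0) Y q g' \<and> kl_eq X (kl_comp Y g' (kl_id X)) f
                  \<longrightarrow> kl_eq X g' g))))
   \<and>
  \<comment> \<open>U \<turnstile> 1: universal arrow id_Y : U(Y,1) \<rightarrow> Y\<close>
   (pred_on Y (\<lambda>_. 1) \<and> kl_hom Y Y (kl_id Y) \<and>
     (\<forall>p f. pred_on X p \<longrightarrow> kl_hom X Y f \<longrightarrow>
        (\<exists>g. groth_hom X p Y (\<lambda>_. 1) g \<and> kl_eq X (kl_comp Y (kl_id Y) g) f \<and>
           (\<forall>g'. groth_hom X p Y (\<lambda>_. 1) g' \<and> kl_eq X (kl_comp Y (kl_id Y) g') f
                  \<longrightarrow> kl_eq X g' g))))
   \<and>
  \<comment> \<open>1 \<turnstile> comprehension: universal arrow (inclusion) 1({X|p}) \<rightarrow> (X,p)\<close>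
   (\<forall>p. pred_on X p \<longrightarrow>
      groth_hom (cmpr X p) (\<lambda>_. 1) X p (cmpr_counit X p) \<and>
      (\<forall>(g :: 'b \<Rightarrow> 'a measure). groth_hom Y (\<lambda>_. 1) X p g \<longrightarrow>
        (\<exists>h. kl_hom Y (cmpr X p) h \<and> kl_eq Y (kl_comp X (cmpr_counit X p) h) g \<and>
           (\<forall>h'. kl_hom Y (cmpr X p) h' \<and> kl_eq Y (kl_comp X (cmpr_counit X p) h') g
                  \<longrightarrow> kl_eq Y h' h))))
   \<and>
  \<comment> \<open>quotient \<turnstile> 0: universal arrow (X,p) \<rightarrow> (X/p, 0)\<close>
   (\<forall>p. pred_on X p \<longrightarrow>
      groth_hom X p (quot X p) (\<lambda>_. 0) (quot_unit X p) \<and>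
      (\<forall>f. groth_hom X p Y (\<lambda>_. 0) f \<longrightarrow>
        (\<exists>g. kl_hom (quot X p) Y g \<and> kl_eq X (kl_comp Y g (quot_unit X p)) f \<and>
           (\<forall>g'. kl_hom (quot X p) Y g' \<and> kl_eq X (kl_comp Y g' (quot_unit X p)) f
                  \<longrightarrow> kl_eq (quot X p) g' g))))"
  using zero_left_adjoint_forget[of X Y] one_right_adjoint_forget[of Y X]
    one_left_adjoint_cmpr[of X _ Y] quot_left_adjoint_zero[of X _ Y]
  by blast

end
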